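(* For $n\ge2$, the family $\mathcal{K}_n$ consists of exactly $2^{\frac{(n-1)(n-2)}{2}}$ Bieberbach groups, and these groups are pairwise nonisomorphic.
   Context: Let $e_1,\dots,e_n$ be the canonical basis of $\mathbb{R}^n$. For $1\le i\le n-1$ let $C_i$ be the diagonal matrix with $-1$ in position $i$ and $1$ elsewhere, and $c_i=\tfrac12e_{i+1}+\sum_{j=1}^{i-1}c_{ji}e_j$ with $c_{ji}\in\{0,\tfrac12\}$. $\mathcal{K}_n$ is the set of subgroups of the Euclidean isometry group $I(\mathbb{R}^n)$ generated by $\{C_iL_{c_i}:1\le i\le n-1\}\cup\{L_{e_j}:1\le j\le n\}$, one for each choice of the parameters $c_{ji}$, $1\le j<i\le n-1$ (here $BL_b$ is $x\mapsto B(x+b)$). A Bieberbach group is a discrete, cocompact, torsion-free subgroup of $I(\mathbb{R}^n)$. *)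

theory Defs
  imports "HOL-Analysis.Analysis" "HOL-Algebra.Generated_Groups"
begin

text \<open>Euclidean space R^n is modelled as real^'n with n = CARD('n); the coordinates
  are labelled 1..n by a bijection ix :: nat => 'n, so that e_i = axis (ix i) 1.\<close>

definition isom_group :: "('n::finite) itself \<Rightarrow> (real^'n \<Rightarrow> real^'n) monoid" where
  "isom_group _ = \<lparr> carrier = {f. bij f \<and> (\<forall>x y. dist (f x) (f y) = dist x y)},
                    mult = (\<lambda>f g. f \<circ> g), one = id \<rparr>"

definition stdbasis :: "(nat \<Rightarrow> 'n::finite) \<Rightarrow> nat \<Rightarrow> real^'n" where
  "stdbasis ix i = axis (ix i) 1"

definition Cvec :: "(nat \<Rightarrow> 'n::finite) \<Rightarrow> (nat \<times> nat \<Rightarrow> real) \<Rightarrow> nat \<Rightarrow> real^'n" where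
  "Cvec ix p i = (1/2) *\<^sub>R stdbasis ix (i+1) + (\<Sum>j\<in>{1..<i}. p (j,i) *\<^sub>R stdbasis ix j)"

definition Cmap :: "(nat \<Rightarrow> 'n::finite) \<Rightarrow> (nat \<times> nat \<Rightarrow> real) \<Rightarrow> nat \<Rightarrow> real^'n \<Rightarrow> real^'n" where
  "Cmap ix p i x = (\<chi> k. if k = ix i then - ((x + Cvec ix p i) $ k) else (x + Cvec ix p i) $ k)"

definition transl :: "real^'n \<Rightarrow> real^'n \<Rightarrow> real^'n" where
  "transl b x = x + b"

definition admissible :: "nat \<Rightarrow> (nat \<times> nat \<Rightarrow> real) \<Rightarrow> bool" where
  "admissible n p \<longleftrightarrow> (\<forall>j i. (1 \<le> j \<and> j < i \<and> i \<le> n - 1 \<longrightarrow> p (j,i) \<in> {0, 1/2})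
                         \<and> (\<not> (1 \<le> j \<and> j < i \<and> i \<le> n - 1) \<longrightarrow> p (j,i) = 0))"

definition Kgens :: "(nat \<Rightarrow> 'n::finite) \<Rightarrow> (nat \<times> nat \<Rightarrow> real) \<Rightarrow> (real^'n \<Rightarrow> real^'n) set" where
  "Kgens ix p = {Cmap ix p i | i. 1 \<le> i \<and> i \<le> CARD('n) - 1}
              \<union> {transl (stdbasis ix j) | j. 1 \<le> j \<and> j \<le> CARD('n)}"

definition Kgroup :: "(nat \<Rightarrow> 'n::finite) \<Rightarrow> (nat \<times> nat \<Rightarrow> real) \<Rightarrow> (real^'n \<Rightarrow> real^'n) monoid" where
  "Kgroup ix p = subgroup_generated (isom_group TYPE('n)) (Kgens ix p)"

definition Kfamily :: "(nat \<Rightarrow> 'n::finite) \<Rightarrow> (real^'n \<Rightarrow> real^'n) set set" where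
  "Kfamily ix = {carrier (Kgroup ix p) | p. admissible CARD('n) p}"

text \<open>Bieberbach: discrete (identity isolated in the compact-open topology of I(R^n)),
  cocompact (a compact set whose translates cover R^n), torsion-free subgroup of I(R^n).\<close>
definition bieberbach :: "(real^'n::finite \<Rightarrow> real^'n) set \<Rightarrow> bool" where
  "bieberbach \<Gamma> \<longleftrightarrow> subgroup \<Gamma> (isom_group TYPE('n))
     \<and> (\<exists>L \<epsilon>. compact L \<and> \<epsilon> > 0 \<and> (\<forall>g\<in>\<Gamma>. (\<forall>x\<in>L. dist (g x) x < \<epsilon>) \<longrightarrow> g = id))
     \<and> (\<exists>K. compact K \<and> (\<Union>g\<in>\<Gamma>. g ` K) = UNIV)
     \<and> (\<forall>g\<in>\<Gamma>. \<forall>k::nat. k \<ge> 1 \<and> (g ^^ k) = id \<longrightarrow> g = id)"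

end

(*
  Every element of the group Gamma_p is an affine map x |-> eps x + v, where eps negates the
  coordinates indexed by some I \<subseteq> {1..n-1} and v is congruent to the sum of the c_i, i \<in> I,
  modulo Z^n.  The coordinate (max I) + 1 is then not negated and v is a half-integer there, so
  such a map has infinite order unless it is the identity; integrality of 2v gives discreteness,
  and the integer translations give cocompactness.

  The integer translations are exactly the elements commuting with all squares, so an
  isomorphism phi : Gamma_p -> Gamma_q induces an automorphism A of Z^n with A eps = eps' A
  whenever phi maps eps x + v to eps' x + v'.  For the generators C_i L_{c_i} this forces
  phi (C_i L_{c_i}) to negate a single coordinate sigma i, and A to be a signed permutation on
  the relevant rows.  Comparing the squares (C_i L_{c_i})^2 = L_{2 c_i} on both sides yields
  c_i(p)_m = c_{sigma i}(q)_{sigma m}; reading this at coordinate i+1, by downward induction,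
  gives sigma = id and then p = q.  Hence the groups are pairwise non-isomorphic and in
  particular distinct, and there are as many as admissible parameter choices.
*)

theory Submission
  imports Defs
begin

section \<open>Affine maps with a diagonal sign matrix\<close>

definition flip_coords :: "'n::finite set \<Rightarrow> real^'n \<Rightarrow> real^'n" where
  "flip_coords F x = (\<chi> k. if k \<in> F then - x $ k else x $ k)"

definition flip_affine :: "'n::finite set \<Rightarrow> real^'n \<Rightarrow> real^'n \<Rightarrow> real^'n" where
  "flip_affine F v x = flip_coords F x + v"

lemma flip_coords_nth [simp]: "flip_coords F x $ k = (if k \<in> F then - x $ k else x $ k)"
  by (simp add: flip_coords_def)

lemma flip_coords_zero [simp]: "flip_coords F 0 = 0"
  by (simp add: vec_eq_iff)

lemma flip_coords_empty [simp]: "flip_coords {} x = x"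
  by (simp add: vec_eq_iff)

lemma flip_coords_diff: "flip_coords F (x - y) = flip_coords F x - flip_coords F y"
  by (simp add: vec_eq_iff)

lemma norm_flip_coords [simp]: "norm (flip_coords F x) = norm x"
  unfolding norm_vec_def by (rule arg_cong[where f = "\<lambda>f. L2_set f UNIV"]) auto

lemma flip_affine_comp:
  "flip_affine F v \<circ> flip_affine G w = flip_affine (sym_diff F G) (flip_coords F w + v)"
  by (auto simp: flip_affine_def vec_eq_iff)

lemma flip_affine_empty: "flip_affine {} v = transl v"
  by (simp add: flip_affine_def transl_def fun_eq_iff)

lemma transl_zero: "transl 0 = id"
  by (simp add: transl_def fun_eq_iff)

lemma transl_comp: "transl u \<circ> transl v = transl (u + v)"
  by (simp add: transl_def fun_eq_iff algebra_simps)

lemma flip_affine_square: "flip_affine F v \<circ> flip_affine F v = transl (flip_coords F v + v)"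
  by (simp add: flip_affine_comp flip_affine_empty)

lemma flip_affine_funpow_nth:
  "c \<notin> F \<Longrightarrow> (flip_affine F v ^^ k) x $ c = x $ c + real k * v $ c"
  by (induction k) (auto simp: flip_affine_def algebra_simps)

lemma flip_affine_eq_iff: "flip_affine F v = flip_affine G w \<longleftrightarrow> F = G \<and> v = w"
proof
  assume eq: "flip_affine F v = flip_affine G w"
  have "flip_affine F v 0 = flip_affine G w 0"
    using eq by simp
  then have "v = w"
    by (simp add: flip_affine_def)
  moreover have "k \<in> F \<longleftrightarrow> k \<in> G" for k
    using fun_cong[OF eq, of "axis k 1"] \<open>v = w\<close>
    by (auto simp: flip_affine_def vec_eq_iff axis_def split: if_splits)
  ultimately show "F = G \<and> v = w" by blast
qed simp

lemma transl_eq_iff: "transl u = transl v \<longleftrightarrow> u = v"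
  by (metis flip_affine_empty flip_affine_eq_iff)

lemma flip_affine_inverse:
  "flip_affine F (- flip_coords F v) \<circ> flip_affine F v = id"
  "flip_affine F v \<circ> flip_affine F (- flip_coords F v) = id"
  by (auto simp: flip_affine_def vec_eq_iff)

lemma isom_group_mult [simp]: "x \<otimes>\<^bsub>isom_group TYPE('n::finite)\<^esub> y = x \<circ> y"
  by (simp add: isom_group_def)

lemma isom_group_one [simp]: "\<one>\<^bsub>isom_group TYPE('n::finite)\<^esub> = id"
  by (simp add: isom_group_def)

lemma isom_group_carrier:
  "f \<in> carrier (isom_group TYPE('n::finite)) \<longleftrightarrow> bij f \<and> (\<forall>x y. dist (f x) (f y) = dist x y)"
  by (simp add: isom_group_def)

lemma group_isom_group: "group (isom_group TYPE('n::finite))"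
proof (rule groupI)
  fix f assume "f \<in> carrier (isom_group TYPE('n))"
  then have f: "bij f" "\<And>x y. dist (f x) (f y) = dist x y"
    by (auto simp: isom_group_carrier)
  have "dist (inv_into UNIV f x) (inv_into UNIV f y) = dist x y" for x y
    using f by (metis bij_inv_eq_iff)
  with f(1) show "\<exists>g\<in>carrier (isom_group TYPE('n)). g \<otimes>\<^bsub>isom_group TYPE('n)\<^esub> f = \<one>\<^bsub>isom_group TYPE('n)\<^esub>"
    by (auto simp: isom_group_carrier bij_imp_bij_inv bij_is_inj
        intro!: bexI[of _ "inv_into UNIV f"])
qed (auto simp: isom_group_carrier bij_comp comp_assoc)

lemma flip_affine_in_isom_group: "flip_affine F v \<in> carrier (isom_group TYPE('n::finite))"
proof -
  have "bij (flip_affine F v)"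
    using flip_affine_inverse by (metis o_bij)
  moreover have "dist (flip_affine F v x) (flip_affine F v y) = dist x y" for x y
    by (simp add: flip_affine_def dist_norm flip_coords_diff[symmetric])
  ultimately show ?thesis by (simp add: isom_group_carrier)
qed

lemma inv_flip_affine:
  "inv\<^bsub>isom_group TYPE('n::finite)\<^esub> (flip_affine F v) = flip_affine F (- flip_coords F v)"
  by (rule group.inv_equality[OF group_isom_group])
     (simp_all add: flip_affine_inverse flip_affine_in_isom_group)

section \<open>The integer lattice\<close>

definition int_vectors :: "(real^'n::finite) set" where
  "int_vectors = {v. \<forall>k. v $ k \<in> \<int>}"

lemma mem_int_vectors: "v \<in> int_vectors \<longleftrightarrow> (\<forall>k. v $ k \<in> \<int>)"
  by (simp add: int_vectors_def)

lemma int_vectors_zero [simp]: "0 \<in> int_vectors"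
  and int_vectors_axis [simp]: "axis k 1 \<in> int_vectors"
  and int_vectors_add: "u \<in> int_vectors \<Longrightarrow> v \<in> int_vectors \<Longrightarrow> u + v \<in> int_vectors"
  and int_vectors_diff: "u \<in> int_vectors \<Longrightarrow> v \<in> int_vectors \<Longrightarrow> u - v \<in> int_vectors"
  and int_vectors_uminus: "u \<in> int_vectors \<Longrightarrow> - u \<in> int_vectors"
  and int_vectors_scaleR: "c \<in> \<int> \<Longrightarrow> u \<in> int_vectors \<Longrightarrow> c *\<^sub>R u \<in> int_vectors"
  and int_vectors_flip_coords: "u \<in> int_vectors \<Longrightarrow> flip_coords F u \<in> int_vectors"
  by (auto simp: mem_int_vectors axis_def)

lemma int_vectors_sum:
  "(\<And>i. i \<in> S \<Longrightarrow> f i \<in> int_vectors) \<Longrightarrow> sum f S \<in> int_vectors"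
  by (auto simp: mem_int_vectors)

lemma int_vectors_induct [consumes 1, case_names zero axis add uminus]:
  fixes u :: "real^'n::finite"
  assumes u: "u \<in> int_vectors"
    and zero: "P 0"
    and axis: "\<And>k. P (axis k 1)"
    and add: "\<And>u v. u \<in> int_vectors \<Longrightarrow> v \<in> int_vectors \<Longrightarrow> P u \<Longrightarrow> P v \<Longrightarrow> P (u + v)"
    and uminus: "\<And>u. u \<in> int_vectors \<Longrightarrow> P u \<Longrightarrow> P (- u)"
  shows "P u"
proof -
  have lattice_multiple: "of_int z *\<^sub>R (axis k 1 :: real^'n) \<in> int_vectors" for z k
    by (intro int_vectors_scaleR) simp_all
  have multiple: "P (of_int z *\<^sub>R (axis k 1 :: real^'n))" for z k
  proof (induction z rule: int_induct[where k = 0])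
    case base
    then show ?case by (simp add: zero)
  next
    case (step1 i)
    have "P (of_int i *\<^sub>R axis k 1 + axis k 1)"
      using step1 by (intro add axis lattice_multiple int_vectors_axis)
    then show ?case by (simp add: algebra_simps)
  next
    case (step2 i)
    have "P (of_int i *\<^sub>R axis k 1 + - axis k 1)"
      using step2 by (intro add uminus axis lattice_multiple int_vectors_uminus int_vectors_axis)
    then show ?case by (simp add: algebra_simps)
  qed
  have "P (\<Sum>k\<in>S. u $ k *\<^sub>R axis k 1)" for S
  proof (induction S rule: infinite_finite_induct)
    case (insert k S)
    have coeff: "u $ j \<in> \<int>" for j
      using u by (simp add: mem_int_vectors)
    obtain z where z: "u $ k = of_int z"
      using coeff[of k] by (auto elim: Ints_cases)
    have "P (u $ k *\<^sub>R axis k 1 + (\<Sum>k\<in>S. u $ k *\<^sub>R axis k 1))"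
      by (rule add)
        (use insert multiple[of z k] z coeff in \<open>auto intro!: int_vectors_sum int_vectors_scaleR\<close>)
    then show ?case
      using insert by simp
  qed (simp_all add: zero)
  from this[of UNIV] show ?thesis
    using basis_expansion[of u] by (simp add: scalar_mult_eq_scaleR)
qed

lemma half_int_vector_eq_0:
  assumes "2 *\<^sub>R v \<in> int_vectors" and "norm v < 1/2"
  shows "v = 0"
proof -
  have "(2 *\<^sub>R v) $ k = 0" for k
  proof (rule Ints_nonzero_abs_less1)
    show "(2 *\<^sub>R v) $ k \<in> \<int>"
      using assms(1) by (simp add: mem_int_vectors)
    show "\<bar>(2 *\<^sub>R v) $ k\<bar> < 1"
      using component_le_norm_cart[of v k] assms(2) by simp
  qed
  then show ?thesis
    by (simp add: vec_eq_iff)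
qed

lemma flip_coords_minus_self:
  assumes "2 *\<^sub>R w \<in> int_vectors"
  shows "flip_coords F w - w \<in> int_vectors"
proof -
  have "(flip_coords F w - w) $ k = (if k \<in> F then - ((2 *\<^sub>R w) $ k) else 0)" for k
    by simp
  then show ?thesis
    using assms by (auto simp: mem_int_vectors)
qed

lemma Ints_mult_eq_1:
  fixes a b :: real
  assumes "a \<in> \<int>" "b \<in> \<int>" "a * b = 1"
  shows "a = 1 \<or> a = -1"
proof -
  obtain x y where "a = of_int x" "b = of_int y"
    using assms(1,2) by (auto elim!: Ints_cases)
  with assms(3) have "x * y = 1"
    by (metis of_int_1 of_int_eq_iff of_int_mult)
  with \<open>a = of_int x\<close> show ?thesis
    using pos_zmult_eq_1_iff_lemma by fastforce
qed

lemma half_values_eq_if_int_diff: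
  fixes a b s :: real
  assumes "a \<in> {0, 1/2}" "b \<in> {0, 1/2}" "s = 1 \<or> s = -1" and "a * s - b \<in> \<int>"
  shows "a = b"
proof (rule ccontr)
  assume "a \<noteq> b"
  then have "\<bar>a * s - b\<bar> = 1/2"
    using assms(1-3) by auto
  then show False
    using Ints_nonzero_abs_less1[OF assms(4)] by simp
qed

section \<open>The groups of the family\<close>

lemma admissible_values: "admissible n p \<Longrightarrow> p x \<in> {0, 1/2}"
  unfolding admissible_def by (cases x) (metis insertCI)

lemma double_Cvec_in_int_vectors:
  assumes "admissible n p"
  shows "2 *\<^sub>R Cvec ix p i \<in> int_vectors"
proof -
  have "2 *\<^sub>R Cvec ix p i = stdbasis ix (i + 1) + (\<Sum>j\<in>{1..<i}. (2 * p (j, i)) *\<^sub>R stdbasis ix j)"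
    by (simp add: Cvec_def scaleR_add_right scaleR_sum_right)
  moreover have "2 * p (j, i) \<in> \<int>" for j
    using admissible_values[OF assms, of "(j, i)"] by (auto simp: mult.commute)
  ultimately show ?thesis
    by (auto simp: stdbasis_def intro!: int_vectors_add int_vectors_sum int_vectors_scaleR)
qed

lemma Cmap_eq_flip_affine: "Cmap ix p i = flip_affine {ix i} (flip_coords {ix i} (Cvec ix p i))"
  by (auto simp: Cmap_def flip_affine_def vec_eq_iff)

definition Csum :: "(nat \<Rightarrow> 'n::finite) \<Rightarrow> (nat \<times> nat \<Rightarrow> real) \<Rightarrow> nat set \<Rightarrow> real^'n" where
  "Csum ix p I = (\<Sum>i\<in>I. Cvec ix p i)"

lemma double_Csum_in_int_vectors: "admissible n p \<Longrightarrow> 2 *\<^sub>R Csum ix p I \<in> int_vectors"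
  unfolding Csum_def scaleR_sum_right by (intro int_vectors_sum double_Cvec_in_int_vectors)

lemma double_in_int_vectors_if_diff_Csum:
  assumes "admissible n p" and "v - Csum ix p I \<in> int_vectors"
  shows "2 *\<^sub>R v \<in> int_vectors"
proof -
  have "2 *\<^sub>R v = 2 *\<^sub>R (v - Csum ix p I) + 2 *\<^sub>R Csum ix p I"
    by (simp add: algebra_simps)
  then show ?thesis
    using assms double_Csum_in_int_vectors
    by (metis Ints_numeral int_vectors_add int_vectors_scaleR)
qed

lemma Csum_sym_diff:
  assumes "finite I" "finite J"
  shows "Csum ix p I + Csum ix p J = Csum ix p (sym_diff I J) + 2 *\<^sub>R Csum ix p (I \<inter> J)"
proof -
  have "Csum ix p I = Csum ix p (I \<inter> J) + Csum ix p (I - J)"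
    unfolding Csum_def using assms(1) by (rule sum.Int_Diff)
  moreover have "Csum ix p J = Csum ix p (I \<inter> J) + Csum ix p (J - I)"
    unfolding Csum_def using sum.Int_Diff[OF assms(2), of _ I] by (simp add: Int_commute)
  moreover have "Csum ix p (sym_diff I J) = Csum ix p (I - J) + Csum ix p (J - I)"
    unfolding Csum_def using assms by (intro sum.union_disjoint) auto
  ultimately show ?thesis
    by (simp add: scaleR_2)
qed

(* All of Kgroup ix p; only the inclusion carrier_Kgroup_subset_Kmaps is needed. *)
definition Kmaps :: "(nat \<Rightarrow> 'n::finite) \<Rightarrow> (nat \<times> nat \<Rightarrow> real) \<Rightarrow> (real^'n \<Rightarrow> real^'n) set" where
  "Kmaps ix p = {flip_affine (ix ` I) v | I v.
     I \<subseteq> {1..CARD('n) - 1} \<and> v - Csum ix p I \<in> int_vectors}"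

lemma KmapsI:
  fixes ix :: "nat \<Rightarrow> 'n::finite"
  assumes "I \<subseteq> {1..CARD('n) - 1}" and "v - Csum ix p I \<in> int_vectors"
  shows "flip_affine (ix ` I) v \<in> Kmaps ix p"
  using assms unfolding Kmaps_def by blast

lemma KmapsE:
  fixes ix :: "nat \<Rightarrow> 'n::finite"
  assumes "g \<in> Kmaps ix p"
  obtains I v where "g = flip_affine (ix ` I) v" "I \<subseteq> {1..CARD('n) - 1}"
    "v - Csum ix p I \<in> int_vectors"
  using assms unfolding Kmaps_def by blast

lemma transl_in_Kmaps: "u \<in> int_vectors \<Longrightarrow> transl u \<in> Kmaps ix p"
  using KmapsI[where I = "{}" and v = u and p = p and ix = ix]
  by (simp add: Csum_def flip_affine_empty)

lemma Kgroup_mult [simp]: "x \<otimes>\<^bsub>Kgroup ix p\<^esub> y = x \<circ> y"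
  by (simp add: Kgroup_def subgroup_generated_def)

lemma Kgroup_eq_carrier_update:
  fixes ix :: "nat \<Rightarrow> 'n::finite"
  shows "Kgroup ix p = (isom_group TYPE('n))\<lparr>carrier := carrier (Kgroup ix p)\<rparr>"
  by (simp add: Kgroup_def subgroup_generated_def)

lemma subgroup_carrier_Kgroup:
  fixes ix :: "nat \<Rightarrow> 'n::finite"
  shows "subgroup (carrier (Kgroup ix p)) (isom_group TYPE('n))"
  unfolding Kgroup_def by (rule group.subgroup_subgroup_generated[OF group_isom_group])

lemma Kgens_subset_Kgroup:
  fixes ix :: "nat \<Rightarrow> 'n::finite"
  shows "Kgens ix p \<subseteq> carrier (Kgroup ix p)"
proof -
  have "Kgens ix p \<subseteq> carrier (isom_group TYPE('n))"
    by (auto simp: Kgens_def Cmap_eq_flip_affine flip_affine_in_isom_group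
        flip_affine_empty[symmetric])
  then show ?thesis
    unfolding Kgroup_def
    by (rule group.subgroup_generated_subset_carrier_subset[OF group_isom_group])
qed

lemma Cmap_in_Kgroup:
  fixes ix :: "nat \<Rightarrow> 'n::finite"
  assumes "i \<in> {1..CARD('n) - 1}"
  shows "Cmap ix p i \<in> carrier (Kgroup ix p)"
proof -
  have "Cmap ix p i \<in> Kgens ix p"
    using assms by (auto simp: Kgens_def)
  then show ?thesis
    using Kgens_subset_Kgroup by blast
qed

locale coordinate_labelling =
  fixes ix :: "nat \<Rightarrow> 'n::finite"
  assumes bij_ix: "bij_betw ix {1..CARD('n)} UNIV"
begin

lemma ix_eq_iff: "i \<in> {1..CARD('n)} \<Longrightarrow> j \<in> {1..CARD('n)} \<Longrightarrow> ix i = ix j \<longleftrightarrow> i = j"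
  using bij_ix by (auto simp: bij_betw_def inj_on_eq_iff)

lemma ix_cases:
  obtains m where "m \<in> {1..CARD('n)}" "k = ix m"
  using bij_ix by (metis bij_betw_def UNIV_I imageE)

lemma ix_image_sym_diff:
  assumes "I \<subseteq> {1..CARD('n)}" "J \<subseteq> {1..CARD('n)}"
  shows "sym_diff (ix ` I) (ix ` J) = ix ` sym_diff I J"
proof -
  have "inj_on ix {1..CARD('n)}"
    using bij_ix by (simp add: bij_betw_def)
  then have "ix ` (I - J) = ix ` I - ix ` J" "ix ` (J - I) = ix ` J - ix ` I"
    using assms by (metis Diff_subset inj_on_image_set_diff order_trans)+
  then show ?thesis
    by (simp add: image_Un)
qed

lemma stdbasis_nth:
  "i \<in> {1..CARD('n)} \<Longrightarrow> m \<in> {1..CARD('n)} \<Longrightarrow> stdbasis ix i $ ix m = (if m = i then 1 else 0)"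
  using ix_eq_iff by (auto simp: stdbasis_def axis_def)

lemma Cvec_nth:
  assumes i: "i \<in> {1..CARD('n) - 1}" and m: "m \<in> {1..CARD('n)}"
  shows "Cvec ix p i $ ix m = (if m = i + 1 then 1/2 else 0) + (if m < i then p (m, i) else 0)"
proof -
  have "(\<Sum>j\<in>{1..<i}. p (j, i) * stdbasis ix j $ ix m) = (\<Sum>j\<in>{1..<i}. if j = m then p (m, i) else 0)"
    using i m by (intro sum.cong) (auto simp: stdbasis_nth)
  also have "\<dots> = (if m < i then p (m, i) else 0)"
    using m by simp
  moreover have "i + 1 \<in> {1..CARD('n)}"
    using i by auto
  ultimately show ?thesis
    using m by (simp add: Cvec_def stdbasis_nth)
qed

lemma Cvec_nth_self: "i \<in> {1..CARD('n) - 1} \<Longrightarrow> Cvec ix p i $ ix i = 0"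
  using Cvec_nth[of i i] by auto

lemma Cvec_nth_values:
  assumes "admissible CARD('n) p" "i \<in> {1..CARD('n) - 1}" "m \<in> {1..CARD('n)}"
  shows "Cvec ix p i $ ix m \<in> {0, 1/2}"
  using Cvec_nth[OF assms(2,3)] admissible_values[OF assms(1), of "(m, i)"] by auto

lemma flip_coords_Cvec: "i \<in> {1..CARD('n) - 1} \<Longrightarrow> flip_coords {ix i} (Cvec ix p i) = Cvec ix p i"
  using Cvec_nth_self[of i p] by (simp add: vec_eq_iff)

lemma Cmap_eq_flip_affine_Cvec:
  "i \<in> {1..CARD('n) - 1} \<Longrightarrow> Cmap ix p i = flip_affine {ix i} (Cvec ix p i)"
  by (simp add: Cmap_eq_flip_affine flip_coords_Cvec)

lemma Cmap_square:
  "i \<in> {1..CARD('n) - 1} \<Longrightarrow> Cmap ix p i \<circ> Cmap ix p i = transl (2 *\<^sub>R Cvec ix p i)"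
  by (simp add: Cmap_eq_flip_affine_Cvec flip_affine_square flip_coords_Cvec scaleR_2)

lemma Kmaps_comp:
  assumes p: "admissible CARD('n) p" and g: "g \<in> Kmaps ix p" and h: "h \<in> Kmaps ix p"
  shows "g \<circ> h \<in> Kmaps ix p"
proof -
  obtain I v where g: "g = flip_affine (ix ` I) v" and I: "I \<subseteq> {1..CARD('n) - 1}"
    and v: "v - Csum ix p I \<in> int_vectors"
    using g by (rule KmapsE)
  obtain J w where h: "h = flip_affine (ix ` J) w" and J: "J \<subseteq> {1..CARD('n) - 1}"
    and w: "w - Csum ix p J \<in> int_vectors"
    using h by (rule KmapsE)
  have fin: "finite I" "finite J"
    using I J finite_subset by blast+
  have "flip_coords (ix ` I) w + v - Csum ix p (sym_diff I J) =
      (flip_coords (ix ` I) w - w) + (w - Csum ix p J) + (v - Csum ix p I) + 2 *\<^sub>R Csum ix p (I \<inter> J)"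
    using Csum_sym_diff[OF fin, of ix p] by (simp add: algebra_simps)
  also have "\<dots> \<in> int_vectors"
    using flip_coords_minus_self[OF double_in_int_vectors_if_diff_Csum[OF p w]] v w
      double_Csum_in_int_vectors[OF p] by (blast intro: int_vectors_add)
  finally have "flip_affine (ix ` sym_diff I J) (flip_coords (ix ` I) w + v) \<in> Kmaps ix p"
    using I J by (intro KmapsI) (auto simp: subset_iff)
  moreover have "ix ` sym_diff I J = sym_diff (ix ` I) (ix ` J)"
    using I J by (intro ix_image_sym_diff[symmetric]) (auto simp: subset_iff)
  ultimately show ?thesis
    by (simp add: g h flip_affine_comp)
qed

lemma Kmaps_inv:
  assumes p: "admissible CARD('n) p" and g: "g \<in> Kmaps ix p"
  shows "inv\<^bsub>isom_group TYPE('n)\<^esub> g \<in> Kmaps ix p"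
proof -
  obtain I v where g: "g = flip_affine (ix ` I) v" and I: "I \<subseteq> {1..CARD('n) - 1}"
    and v: "v - Csum ix p I \<in> int_vectors"
    using g by (rule KmapsE)
  have "- flip_coords (ix ` I) v - Csum ix p I =
      - (flip_coords (ix ` I) v - v) - (v - Csum ix p I) - 2 *\<^sub>R Csum ix p I"
    by (simp add: algebra_simps scaleR_2)
  also have "\<dots> \<in> int_vectors"
    using flip_coords_minus_self[OF double_in_int_vectors_if_diff_Csum[OF p v]] v
      double_Csum_in_int_vectors[OF p] by (blast intro: int_vectors_diff int_vectors_uminus)
  finally show ?thesis
    using I by (simp add: g inv_flip_affine KmapsI)
qed

lemma subgroup_Kmaps:
  assumes "admissible CARD('n) p"
  shows "subgroup (Kmaps ix p) (isom_group TYPE('n))"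
proof (rule group.subgroupI[OF group_isom_group])
  show "Kmaps ix p \<subseteq> carrier (isom_group TYPE('n))"
    by (auto elim!: KmapsE simp: flip_affine_in_isom_group)
  show "Kmaps ix p \<noteq> {}"
    using transl_in_Kmaps[OF int_vectors_zero] by blast
qed (use assms Kmaps_comp Kmaps_inv in auto)

lemma Kgens_subset_Kmaps: "Kgens ix p \<subseteq> Kmaps ix p"
proof
  fix g assume "g \<in> Kgens ix p"
  then consider i where "g = Cmap ix p i" "i \<in> {1..CARD('n) - 1}"
    | j where "g = transl (stdbasis ix j)"
    unfolding Kgens_def by fastforce
  then show "g \<in> Kmaps ix p"
  proof cases
    case (1 i)
    then show ?thesis
      using KmapsI[where I = "{i}" and v = "Cvec ix p i" and p = p and ix = ix]
      by (simp add: Cmap_eq_flip_affine_Cvec Csum_def)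
  qed (simp add: transl_in_Kmaps stdbasis_def)
qed

lemma carrier_Kgroup_subset_Kmaps:
  "admissible CARD('n) p \<Longrightarrow> carrier (Kgroup ix p) \<subseteq> Kmaps ix p"
  unfolding Kgroup_def
  by (rule group.subgroup_generated_minimal[OF group_isom_group subgroup_Kmaps Kgens_subset_Kmaps])

lemma transl_in_Kgroup:
  assumes "u \<in> int_vectors"
  shows "transl u \<in> carrier (Kgroup ix p)"
  using assms
proof (induction rule: int_vectors_induct)
  case zero
  then show ?case
    using subgroup.one_closed[OF subgroup_carrier_Kgroup] by (metis isom_group_one transl_zero)
next
  case (axis k)
  obtain m where "m \<in> {1..CARD('n)}" "k = ix m"
    by (rule ix_cases)
  then have "transl (axis k 1) \<in> Kgens ix p"
    by (auto simp: Kgens_def stdbasis_def)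
  then show ?case
    using Kgens_subset_Kgroup by blast
next
  case (add u v)
  then have "transl u \<circ> transl v \<in> carrier (Kgroup ix p)"
    using subgroup.m_closed[OF subgroup_carrier_Kgroup] by (metis isom_group_mult)
  then show ?case
    by (simp add: transl_comp)
next
  case (uminus u)
  then show ?case
    using subgroup.m_inv_closed[OF subgroup_carrier_Kgroup]
    by (fastforce simp: flip_affine_empty[symmetric] inv_flip_affine)
qed

section \<open>The groups are Bieberbach groups\<close>

lemma Csum_half_coordinate:
  assumes I: "I \<subseteq> {1..CARD('n) - 1}" "I \<noteq> {}"
  obtains c where "c \<notin> ix ` I" "Csum ix p I $ c = 1/2"
proof
  have fin: "finite I"
    using I(1) finite_subset by blast
  have "Max I \<in> I"
    using fin I(2) by simp
  then have top: "Max I + 1 \<in> {1..CARD('n)}"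
    using I(1) by (auto simp: subset_iff)
  have Cvec_top: "Cvec ix p j $ ix (Max I + 1) = (if j = Max I then 1/2 else 0)" if "j \<in> I" for j
  proof -
    have "j \<le> Max I"
      using fin that by simp
    then show ?thesis
      using that I(1) top by (subst Cvec_nth) (auto simp: subset_iff)
  qed
  have "Csum ix p I $ ix (Max I + 1) = (\<Sum>j\<in>I. if j = Max I then 1/2 else 0)"
    unfolding Csum_def sum_component using Cvec_top by (intro sum.cong) auto
  then show "Csum ix p I $ ix (Max I + 1) = 1/2"
    using fin \<open>Max I \<in> I\<close> by simp
  show "ix (Max I + 1) \<notin> ix ` I"
  proof
    assume "ix (Max I + 1) \<in> ix ` I"
    then obtain j where "j \<in> I" "ix (Max I + 1) = ix j"
      by blast
    moreover have "j \<le> Max I"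
      using fin \<open>j \<in> I\<close> by simp
    moreover have "j \<in> {1..CARD('n)}"
      using I(1) \<open>j \<in> I\<close> by (auto simp: subset_iff)
    ultimately show False
      using ix_eq_iff[OF top] by fastforce
  qed
qed

lemma Kmaps_torsion_free:
  assumes p: "admissible CARD('n) p" and g: "g \<in> Kmaps ix p"
    and k: "k \<ge> 1" "g ^^ k = id"
  shows "g = id"
proof -
  obtain I v where g: "g = flip_affine (ix ` I) v" and I: "I \<subseteq> {1..CARD('n) - 1}"
    and v: "v - Csum ix p I \<in> int_vectors"
    using g by (rule KmapsE)
  have fixed: "v $ c = 0" if "c \<notin> ix ` I" for c
    using flip_affine_funpow_nth[OF that, where v = v and k = k and x = 0] g k by simp
  have "I = {}"
  proof (rule ccontr)
    assume "I \<noteq> {}"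
    then obtain c where c: "c \<notin> ix ` I" "Csum ix p I $ c = 1/2"
      using Csum_half_coordinate[OF I] by blast
    have "(v - Csum ix p I) $ c \<in> \<int>"
      using v by (simp add: mem_int_vectors)
    then show False
      using fixed[OF c(1)] c(2) Ints_nonzero_abs_less1[of "- 1/2 :: real"] by simp
  qed
  then have "v = 0"
    using fixed by (simp add: vec_eq_iff)
  with \<open>I = {}\<close> show ?thesis
    by (simp add: g flip_affine_empty transl_zero)
qed

lemma Kmaps_discrete:
  assumes p: "admissible CARD('n) p" and g: "g \<in> Kmaps ix p"
    and near: "\<forall>x\<in>insert 0 (range (\<lambda>k. axis k 1)). dist (g x) x < 1/2"
  shows "g = id"
proof -
  obtain I v where g: "g = flip_affine (ix ` I) v" and v: "v - Csum ix p I \<in> int_vectors"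
    using g by (rule KmapsE)
  have "v = 0"
  proof (rule half_int_vector_eq_0)
    show "2 *\<^sub>R v \<in> int_vectors"
      using double_in_int_vectors_if_diff_Csum[OF p v] .
    show "norm v < 1/2"
      using near by (simp add: g flip_affine_def dist_norm)
  qed
  have "ix ` I = {}"
  proof (rule ccontr)
    assume "ix ` I \<noteq> {}"
    then obtain k where k: "k \<in> ix ` I"
      by blast
    then have "(g (axis k 1) - axis k 1) $ k = -2"
      by (simp add: g \<open>v = 0\<close> flip_affine_def)
    moreover have "norm (g (axis k 1) - axis k 1) < 1/2"
      using near by (simp add: dist_norm)
    ultimately show False
      using component_le_norm_cart[of "g (axis k 1) - axis k 1" k] by simp
  qed
  then show ?thesis
    by (simp add: g \<open>v = 0\<close> flip_affine_empty transl_zero)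
qed

lemma Kgroup_translates_cover: "(\<Union>g\<in>carrier (Kgroup ix p). g ` cbox 0 1) = UNIV"
proof -
  have "y \<in> (\<Union>g\<in>carrier (Kgroup ix p). g ` cbox 0 1)" for y :: "real^'n"
  proof (rule UN_I)
    let ?u = "\<chi> k. of_int \<lfloor>y $ k\<rfloor> :: real^'n"
    show "transl ?u \<in> carrier (Kgroup ix p)"
      by (rule transl_in_Kgroup) (simp add: mem_int_vectors)
    show "y \<in> transl ?u ` cbox 0 1"
    proof (rule image_eqI)
      show "y = transl ?u (y - ?u)"
        by (simp add: transl_def)
      show "y - ?u \<in> cbox 0 1"
        by (simp add: mem_box_cart) linarith
    qed
  qed
  then show ?thesis
    by blast
qed

lemma bieberbach_Kgroup:
  assumes p: "admissible CARD('n) p"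
  shows "bieberbach (carrier (Kgroup ix p))"
  unfolding bieberbach_def
proof (intro conjI)
  show "subgroup (carrier (Kgroup ix p)) (isom_group TYPE('n))"
    by (rule subgroup_carrier_Kgroup)
  show "\<exists>L \<epsilon>. compact L \<and> \<epsilon> > 0 \<and> (\<forall>g\<in>carrier (Kgroup ix p). (\<forall>x\<in>L. dist (g x) x < \<epsilon>) \<longrightarrow> g = id)"
  proof (intro exI conjI ballI impI)
    show "compact (insert 0 (range (\<lambda>k. axis k 1)) :: (real^'n) set)"
      by (rule finite_imp_compact) simp
    show "(1/2 :: real) > 0"
      by simp
    fix g assume g: "g \<in> carrier (Kgroup ix p)"
      and near: "\<forall>x\<in>insert 0 (range (\<lambda>k. axis k 1)). dist (g x) x < 1/2"
    show "g = id"
      using carrier_Kgroup_subset_Kmaps[OF p] g by (intro Kmaps_discrete[OF p _ near]) auto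
  qed
  show "\<exists>K. compact K \<and> (\<Union>g\<in>carrier (Kgroup ix p). g ` K) = UNIV"
    by (intro exI[of _ "cbox 0 1"] conjI compact_cbox Kgroup_translates_cover)
  show "\<forall>g\<in>carrier (Kgroup ix p). \<forall>k::nat. k \<ge> 1 \<and> g ^^ k = id \<longrightarrow> g = id"
  proof (intro ballI allI impI)
    fix g k assume "g \<in> carrier (Kgroup ix p)" and "k \<ge> 1 \<and> g ^^ k = id"
    then show "g = id"
      using carrier_Kgroup_subset_Kmaps[OF p] by (intro Kmaps_torsion_free[OF p, of g k]) auto
  qed
qed

end

section \<open>The translation subgroup is an isomorphism invariant\<close>

definition square_centralizer :: "('a, 'b) monoid_scheme \<Rightarrow> 'a set" where
  "square_centralizer G =
     {g \<in> carrier G. \<forall>h\<in>carrier G. g \<otimes>\<^bsub>G\<^esub> (h \<otimes>\<^bsub>G\<^esub> h) = (h \<otimes>\<^bsub>G\<^esub> h) \<otimes>\<^bsub>G\<^esub> g}"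

lemma (in monoid) iso_image_square_centralizer:
  assumes "\<phi> \<in> iso G H"
  shows "\<phi> ` square_centralizer G = square_centralizer H"
proof -
  have hom: "\<phi> \<in> hom G H" and bij: "bij_betw \<phi> (carrier G) (carrier H)"
    using assms by (auto simp: iso_def)
  have image: "carrier H = \<phi> ` carrier G"
    using bij by (simp add: bij_betw_def)
  have commute_iff:
    "\<phi> g \<otimes>\<^bsub>H\<^esub> (\<phi> h \<otimes>\<^bsub>H\<^esub> \<phi> h) = (\<phi> h \<otimes>\<^bsub>H\<^esub> \<phi> h) \<otimes>\<^bsub>H\<^esub> \<phi> g
       \<longleftrightarrow> g \<otimes> (h \<otimes> h) = (h \<otimes> h) \<otimes> g"
    if "g \<in> carrier G" "h \<in> carrier G" for g h
  proof -
    have "\<phi> g \<otimes>\<^bsub>H\<^esub> (\<phi> h \<otimes>\<^bsub>H\<^esub> \<phi> h) = \<phi> (g \<otimes> (h \<otimes> h))"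
      and "(\<phi> h \<otimes>\<^bsub>H\<^esub> \<phi> h) \<otimes>\<^bsub>H\<^esub> \<phi> g = \<phi> ((h \<otimes> h) \<otimes> g)"
      using that by (simp_all add: hom_mult[OF hom])
    then show ?thesis
      using that bij_betw_imp_inj_on[OF bij] by (simp add: inj_on_eq_iff)
  qed
  show ?thesis
    unfolding square_centralizer_def image using commute_iff by auto
qed

lemma (in coordinate_labelling) square_centralizer_Kgroup:
  assumes p: "admissible CARD('n) p"
  shows "square_centralizer (Kgroup ix p) = transl ` int_vectors"
proof
  show "transl ` int_vectors \<subseteq> square_centralizer (Kgroup ix p)"
  proof (clarsimp simp: square_centralizer_def transl_in_Kgroup)
    fix u h
    assume "h \<in> carrier (Kgroup ix p)"
    then obtain F v where "h = flip_affine F v"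
      using carrier_Kgroup_subset_Kmaps[OF p] by (blast elim: KmapsE)
    then show "transl u \<circ> (h \<circ> h) = h \<circ> h \<circ> transl u"
      by (simp add: flip_affine_square transl_comp add.commute)
  qed
  show "square_centralizer (Kgroup ix p) \<subseteq> transl ` int_vectors"
  proof
    fix g assume g: "g \<in> square_centralizer (Kgroup ix p)"
    then obtain I v where g_eq: "g = flip_affine (ix ` I) v" and v: "v - Csum ix p I \<in> int_vectors"
      using carrier_Kgroup_subset_Kmaps[OF p] by (auto simp: square_centralizer_def elim!: KmapsE)
    have "k \<notin> ix ` I" for k
    proof
      assume k: "k \<in> ix ` I"
      let ?e = "axis k 1 :: real^'n"
      have "transl ?e \<in> carrier (Kgroup ix p)"
        by (simp add: transl_in_Kgroup)
      then have "g \<circ> (transl ?e \<circ> transl ?e) = (transl ?e \<circ> transl ?e) \<circ> g"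
        using g unfolding square_centralizer_def Kgroup_mult by blast
      then have "flip_affine (sym_diff (ix ` I) {}) (flip_coords (ix ` I) (?e + ?e) + v) =
          flip_affine (sym_diff {} (ix ` I)) (flip_coords {} v + (?e + ?e))"
        unfolding g_eq transl_comp flip_affine_empty[symmetric] flip_affine_comp by simp
      then have "(flip_coords (ix ` I) (?e + ?e) + v) $ k = (flip_coords {} v + (?e + ?e)) $ k"
        unfolding flip_affine_eq_iff by simp
      with k show False
        by simp
    qed
    then have "I = {}"
      by blast
    with g_eq v show "g \<in> transl ` int_vectors"
      by (simp add: flip_affine_empty Csum_def)
  qed
qed

section \<open>Automorphisms of the integer lattice\<close>

locale lattice_automorphism =
  fixes A :: "real^'n::finite \<Rightarrow> real^'n"
  assumes additive: "u \<in> int_vectors \<Longrightarrow> v \<in> int_vectors \<Longrightarrow> A (u + v) = A u + A v"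
    and maps_int_vectors: "u \<in> int_vectors \<Longrightarrow> A u \<in> int_vectors"
    and injective: "u \<in> int_vectors \<Longrightarrow> A u = 0 \<Longrightarrow> u = 0"
    and surjective: "w \<in> int_vectors \<Longrightarrow> \<exists>u\<in>int_vectors. A u = w"
begin

lemma map_zero: "A 0 = 0"
  using additive[of 0 0] by simp

lemma map_uminus: "u \<in> int_vectors \<Longrightarrow> A (- u) = - A u"
  using additive[of u "- u"] map_zero
  by (simp add: int_vectors_uminus eq_neg_iff_add_eq_0 add.commute)

lemma expansion:
  assumes "u \<in> int_vectors"
  shows "A u = (\<Sum>k\<in>UNIV. u $ k *\<^sub>R A (axis k 1))"
  using assms
proof (induction rule: int_vectors_induct)
  case zero
  then show ?case
    by (simp add: map_zero)
next
  case (axis j)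
  have "(\<Sum>k\<in>UNIV. axis j 1 $ k *\<^sub>R A (axis k 1)) = (\<Sum>k\<in>UNIV. if k = j then A (axis k 1) else 0)"
    by (intro sum.cong) (auto simp: axis_def)
  then show ?case
    by simp
next
  case (add u v)
  then show ?case
    by (simp add: additive scaleR_add_left sum.distrib)
next
  case (uminus u)
  then show ?case
    by (simp add: map_uminus sum_negf)
qed

lemma axis_image_neq_0: "A (axis k 1) \<noteq> 0"
proof
  assume "A (axis k 1) = 0"
  then have "axis k 1 = (0 :: real^'n)"
    by (rule injective[OF int_vectors_axis])
  then have "axis k 1 $ k = (0 :: real^'n) $ k"
    by simp
  then show False
    by simp
qed

definition row_supported_in :: "'n \<Rightarrow> 'n \<Rightarrow> bool" where
  "row_supported_in c k \<longleftrightarrow> (\<forall>j. j \<noteq> k \<longrightarrow> A (axis j 1) $ c = 0)"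

lemma coordinate_if_row_supported_in:
  assumes "row_supported_in c k" and "u \<in> int_vectors"
  shows "A u $ c = u $ k * A (axis k 1) $ c"
proof -
  have "A u $ c = (\<Sum>j\<in>UNIV. u $ j * A (axis j 1) $ c)"
    using expansion[OF assms(2)] by simp
  also have "\<dots> = (\<Sum>j\<in>UNIV. if j = k then u $ k * A (axis k 1) $ c else 0)"
    using assms(1) by (intro sum.cong) (auto simp: row_supported_in_def)
  finally show ?thesis
    by simp
qed

lemma entry_unit_if_row_supported_in:
  assumes "row_supported_in c k"
  shows "A (axis k 1) $ c = 1 \<or> A (axis k 1) $ c = -1"
proof -
  obtain u where u: "u \<in> int_vectors" "A u = axis c 1"
    using surjective[of "axis c 1"] by auto
  then have "A (axis k 1) $ c * u $ k = 1"
    using coordinate_if_row_supported_in[OF assms u(1)] by (simp add: mult.commute)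
  moreover have "A (axis k 1) $ c \<in> \<int>" "u $ k \<in> \<int>"
    using maps_int_vectors[OF int_vectors_axis, of k] u(1) by (simp_all add: mem_int_vectors)
  ultimately show ?thesis
    using Ints_mult_eq_1 by blast
qed

lemma row_supported_in_unique_column:
  assumes "row_supported_in c k" and "row_supported_in c k'"
  shows "k = k'"
  using assms entry_unit_if_row_supported_in[OF assms(1)] by (force simp: row_supported_in_def)

lemma row_supported_in_unique_row:
  assumes "row_supported_in c k" and "row_supported_in c' k"
  shows "c = c'"
proof (rule ccontr)
  assume "c \<noteq> c'"
  obtain u where u: "u \<in> int_vectors" "A u = axis c 1"
    using surjective[of "axis c 1"] by auto
  have "u $ k * A (axis k 1) $ c = 1"
    using coordinate_if_row_supported_in[OF assms(1) u(1)] u(2) by simp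
  moreover have "u $ k * A (axis k 1) $ c' = 0"
    using coordinate_if_row_supported_in[OF assms(2) u(1)] u(2) \<open>c \<noteq> c'\<close> by (simp add: axis_def)
  ultimately show False
    using entry_unit_if_row_supported_in[OF assms(2)] by auto
qed

end

section \<open>Isomorphic groups have equal parameters\<close>

locale Kgroup_isomorphism = coordinate_labelling ix for ix :: "nat \<Rightarrow> 'n::finite" +
  fixes p q :: "nat \<times> nat \<Rightarrow> real"
    and \<phi> :: "(real^'n \<Rightarrow> real^'n) \<Rightarrow> real^'n \<Rightarrow> real^'n"
  assumes admissible_p: "admissible CARD('n) p"
    and admissible_q: "admissible CARD('n) q"
    and iso: "\<phi> \<in> iso (Kgroup ix p) (Kgroup ix q)"
begin

lemma phi_comp:
  "g \<in> carrier (Kgroup ix p) \<Longrightarrow> h \<in> carrier (Kgroup ix p) \<Longrightarrow> \<phi> (g \<circ> h) = \<phi> g \<circ> \<phi> h"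
  using hom_mult[OF iso_imp_homomorphism[OF iso]] by simp

lemma phi_in_Kmaps: "g \<in> carrier (Kgroup ix p) \<Longrightarrow> \<phi> g \<in> Kmaps ix q"
  using hom_in_carrier[OF iso_imp_homomorphism[OF iso]] carrier_Kgroup_subset_Kmaps[OF admissible_q]
  by blast

lemma phi_image_translations: "\<phi> ` transl ` int_vectors = transl ` int_vectors"
proof -
  have "monoid (Kgroup ix p)"
    unfolding Kgroup_def
    by (intro group.is_monoid group.group_subgroup_generated group_isom_group)
  then show ?thesis
    using monoid.iso_image_square_centralizer[OF _ iso]
    by (simp add: square_centralizer_Kgroup admissible_p admissible_q)
qed

(* phi maps lattice translations to lattice translations (phi_transl); evaluation at 0 reads
   off the translation vector. *)
definition lattice_map :: "real^'n \<Rightarrow> real^'n" where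
  "lattice_map u = \<phi> (transl u) 0"

lemma phi_transl:
  assumes "u \<in> int_vectors"
  shows "\<phi> (transl u) = transl (lattice_map u)" and "lattice_map u \<in> int_vectors"
proof -
  have "\<phi> (transl u) \<in> \<phi> ` transl ` int_vectors"
    using assms by blast
  then obtain w where "w \<in> int_vectors" "\<phi> (transl u) = transl w"
    unfolding phi_image_translations by blast
  moreover have "lattice_map u = w"
    using \<open>\<phi> (transl u) = transl w\<close> by (simp add: lattice_map_def transl_def)
  ultimately show "\<phi> (transl u) = transl (lattice_map u)" "lattice_map u \<in> int_vectors"
    by simp_all
qed

lemma lattice_map_add:
  assumes "u \<in> int_vectors" "v \<in> int_vectors"
  shows "lattice_map (u + v) = lattice_map u + lattice_map v"
proof -
  have "transl (lattice_map (u + v)) = \<phi> (transl u \<circ> transl v)"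
    using assms by (simp add: phi_transl int_vectors_add transl_comp)
  also have "\<dots> = transl (lattice_map u + lattice_map v)"
    using assms by (simp add: phi_comp transl_in_Kgroup phi_transl, simp add: transl_comp)
  finally show ?thesis
    by (simp add: transl_eq_iff)
qed

lemma lattice_map_eq_0_imp:
  assumes "u \<in> int_vectors" "lattice_map u = 0"
  shows "u = 0"
proof -
  have "lattice_map 0 = 0"
    using lattice_map_add[of 0 0] by simp
  then have "\<phi> (transl u) = \<phi> (transl 0)"
    using assms by (simp add: phi_transl)
  moreover have "inj_on \<phi> (carrier (Kgroup ix p))"
    using iso by (simp add: iso_def bij_betw_def)
  ultimately have "transl u = transl 0"
    using assms inj_onD[of \<phi> "carrier (Kgroup ix p)" "transl u" "transl 0"]
    by (simp add: transl_in_Kgroup)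
  then show ?thesis
    by (simp add: transl_eq_iff)
qed

lemma lattice_map_surj:
  assumes "w \<in> int_vectors"
  shows "\<exists>u\<in>int_vectors. lattice_map u = w"
proof -
  have "transl w \<in> \<phi> ` transl ` int_vectors"
    unfolding phi_image_translations using assms by blast
  then obtain u where "u \<in> int_vectors" "transl w = \<phi> (transl u)"
    by blast
  then show ?thesis
    by (auto simp: phi_transl transl_eq_iff)
qed

sublocale lattice_automorphism lattice_map
  by unfold_locales (fact lattice_map_add phi_transl(2) lattice_map_eq_0_imp lattice_map_surj)+

lemma lattice_map_conj:
  assumes g: "g \<in> carrier (Kgroup ix p)" "g = flip_affine F v" and img: "\<phi> g = flip_affine F' v'"
    and u: "u \<in> int_vectors"
  shows "lattice_map (flip_coords F u) = flip_coords F' (lattice_map u)"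
proof -
  have "g \<circ> transl u = transl (flip_coords F u) \<circ> g"
    by (simp add: g(2) flip_affine_empty[symmetric] flip_affine_comp add.commute)
  then have "\<phi> (g \<circ> transl u) = \<phi> (transl (flip_coords F u) \<circ> g)"
    by simp
  moreover have "\<phi> (g \<circ> transl u) = \<phi> g \<circ> transl (lattice_map u)"
    using g(1) u by (simp add: phi_comp transl_in_Kgroup phi_transl)
  moreover have "\<phi> (transl (flip_coords F u) \<circ> g) = transl (lattice_map (flip_coords F u)) \<circ> \<phi> g"
    using g(1) u by (simp add: phi_comp transl_in_Kgroup phi_transl int_vectors_flip_coords)
  ultimately have "flip_affine F' (flip_coords F' (lattice_map u) + v') =
      flip_affine F' (v' + lattice_map (flip_coords F u))"
    by (simp add: img flip_affine_empty[symmetric] flip_affine_comp)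
  then show ?thesis
    by (simp add: flip_affine_eq_iff)
qed

lemma generator_image_supports:
  assumes i: "i \<in> {1..CARD('n) - 1}" and img: "\<phi> (Cmap ix p i) = flip_affine F v'"
  shows "c \<in> F \<Longrightarrow> row_supported_in c (ix i)"
    and "c \<notin> F \<Longrightarrow> lattice_map (axis (ix i) 1) $ c = 0"
proof -
  note conj = lattice_map_conj[OF Cmap_in_Kgroup[OF i] Cmap_eq_flip_affine_Cvec[OF i] img]
  show "row_supported_in c (ix i)" if "c \<in> F"
    unfolding row_supported_in_def
  proof (intro allI impI)
    fix j assume "j \<noteq> ix i"
    then have "flip_coords {ix i} (axis j 1) = axis j 1"
      by (simp add: vec_eq_iff axis_def)
    then have "lattice_map (axis j 1) = flip_coords F (lattice_map (axis j 1))"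
      using conj[OF int_vectors_axis, of j] by simp
    then have "lattice_map (axis j 1) $ c = flip_coords F (lattice_map (axis j 1)) $ c"
      by (rule arg_cong)
    with that show "lattice_map (axis j 1) $ c = 0"
      by simp
  qed
  show "lattice_map (axis (ix i) 1) $ c = 0" if "c \<notin> F"
  proof -
    have "flip_coords {ix i} (axis (ix i) 1) = - axis (ix i) 1"
      by (simp add: vec_eq_iff axis_def)
    then have "- lattice_map (axis (ix i) 1) = flip_coords F (lattice_map (axis (ix i) 1))"
      using conj[OF int_vectors_axis, of "ix i"] map_uminus[OF int_vectors_axis] by simp
    then have "(- lattice_map (axis (ix i) 1)) $ c = flip_coords F (lattice_map (axis (ix i) 1)) $ c"
      by (rule arg_cong)
    with that show ?thesis
      by simp
  qed
qed

lemma generator_image: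
  assumes i: "i \<in> {1..CARD('n) - 1}"
  shows "\<exists>s. s \<in> {1..CARD('n) - 1} \<and>
    (\<exists>v'. \<phi> (Cmap ix p i) = flip_affine {ix s} v' \<and> v' - Cvec ix q s \<in> int_vectors)"
proof -
  obtain J v' where img: "\<phi> (Cmap ix p i) = flip_affine (ix ` J) v'"
    and J: "J \<subseteq> {1..CARD('n) - 1}" and v': "v' - Csum ix q J \<in> int_vectors"
    using phi_in_Kmaps[OF Cmap_in_Kgroup[OF i]] by (rule KmapsE)
  have "J \<noteq> {}"
  proof
    assume "J = {}"
    then have "lattice_map (axis (ix i) 1) = 0"
      using generator_image_supports(2)[OF i img] by (simp add: vec_eq_iff)
    then show False
      using axis_image_neq_0 by blast
  qed
  then obtain s where "s \<in> J"
    by blast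
  have "j = s" if "j \<in> J" for j
  proof -
    have "row_supported_in (ix j) (ix i)" "row_supported_in (ix s) (ix i)"
      using generator_image_supports(1)[OF i img] \<open>s \<in> J\<close> that by auto
    then have "ix j = ix s"
      by (rule row_supported_in_unique_row)
    moreover have "j \<in> {1..CARD('n)}" "s \<in> {1..CARD('n)}"
      using J that \<open>s \<in> J\<close> by (auto simp: subset_iff)
    ultimately show ?thesis
      using ix_eq_iff by blast
  qed
  with \<open>s \<in> J\<close> have "J = {s}"
    by blast
  then show ?thesis
    using img J v' by (auto simp: Csum_def)
qed

definition \<sigma> :: "nat \<Rightarrow> nat" where
  "\<sigma> i = (SOME s. s \<in> {1..CARD('n) - 1} \<and>
     (\<exists>v'. \<phi> (Cmap ix p i) = flip_affine {ix s} v' \<and> v' - Cvec ix q s \<in> int_vectors))"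

lemma \<sigma>_spec:
  assumes "i \<in> {1..CARD('n) - 1}"
  shows "\<sigma> i \<in> {1..CARD('n) - 1}"
    and "\<exists>v'. \<phi> (Cmap ix p i) = flip_affine {ix (\<sigma> i)} v' \<and> v' - Cvec ix q (\<sigma> i) \<in> int_vectors"
proof -
  have "\<sigma> i \<in> {1..CARD('n) - 1} \<and>
      (\<exists>v'. \<phi> (Cmap ix p i) = flip_affine {ix (\<sigma> i)} v' \<and> v' - Cvec ix q (\<sigma> i) \<in> int_vectors)"
    unfolding \<sigma>_def by (rule someI_ex[OF generator_image[OF assms]])
  then show "\<sigma> i \<in> {1..CARD('n) - 1}"
    and "\<exists>v'. \<phi> (Cmap ix p i) = flip_affine {ix (\<sigma> i)} v' \<and> v' - Cvec ix q (\<sigma> i) \<in> int_vectors"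
    by simp_all
qed

lemma row_supported_in_\<sigma>:
  assumes "i \<in> {1..CARD('n) - 1}"
  shows "row_supported_in (ix (\<sigma> i)) (ix i)"
proof -
  obtain v' where "\<phi> (Cmap ix p i) = flip_affine {ix (\<sigma> i)} v'"
    using \<sigma>_spec(2)[OF assms] by blast
  then show ?thesis
    by (rule generator_image_supports(1)[OF assms]) simp
qed

lemma column_\<sigma>:
  assumes "i \<in> {1..CARD('n) - 1}" and "c \<noteq> ix (\<sigma> i)"
  shows "lattice_map (axis (ix i) 1) $ c = 0"
proof -
  obtain v' where "\<phi> (Cmap ix p i) = flip_affine {ix (\<sigma> i)} v'"
    using \<sigma>_spec(2)[OF assms(1)] by blast
  then show ?thesis
    by (rule generator_image_supports(2)[OF assms(1)]) (simp add: assms(2))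
qed

lemma inj_on_\<sigma>: "inj_on \<sigma> {1..CARD('n) - 1}"
proof (rule inj_onI)
  fix i j assume i: "i \<in> {1..CARD('n) - 1}" and j: "j \<in> {1..CARD('n) - 1}" and "\<sigma> i = \<sigma> j"
  then have "row_supported_in (ix (\<sigma> i)) (ix i)" "row_supported_in (ix (\<sigma> i)) (ix j)"
    using row_supported_in_\<sigma>[OF i] row_supported_in_\<sigma>[OF j] by simp_all
  then have "ix i = ix j"
    by (rule row_supported_in_unique_column)
  moreover have "i \<in> {1..CARD('n)}" "j \<in> {1..CARD('n)}"
    using i j by auto
  ultimately show "i = j"
    using ix_eq_iff by blast
qed

lemma row_supported_in_last: "row_supported_in (ix CARD('n)) (ix CARD('n))"
  unfolding row_supported_in_def
proof (intro allI impI)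
  fix k assume k: "k \<noteq> ix CARD('n)"
  obtain m where m: "m \<in> {1..CARD('n)}" "k = ix m"
    by (rule ix_cases)
  have "m \<noteq> CARD('n)"
    using k m(2) by auto
  with m(1) have m': "m \<in> {1..CARD('n) - 1}"
    by auto
  have "1 \<le> \<sigma> m" "\<sigma> m \<le> CARD('n) - 1"
    using \<sigma>_spec(1)[OF m'] by auto
  then have "\<sigma> m \<in> {1..CARD('n)}" "\<sigma> m \<noteq> CARD('n)" "CARD('n) \<in> {1..CARD('n)}"
    by auto
  then have "ix CARD('n) \<noteq> ix (\<sigma> m)"
    using ix_eq_iff[of "CARD('n)" "\<sigma> m"] by simp
  then show "lattice_map (axis k 1) $ ix CARD('n) = 0"
    unfolding m(2) by (rule column_\<sigma>[OF m'])
qed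

(* Compare the images of (C_i L_{c_i})^2 = L_{2 c_i}: on the row ix m', the lattice map is
   +-1 times the m-th coordinate, while phi (C_i L_{c_i})^2 is the translation by
   2 c_{\<sigma> i}(q) modulo 2 Z^n.  All entries involved lie in {0, 1/2}. *)
lemma Cvec_nth_transport:
  assumes i: "i \<in> {1..CARD('n) - 1}" and m: "m \<in> {1..CARD('n)}" and m': "m' \<in> {1..CARD('n)}"
    and row: "row_supported_in (ix m') (ix m)"
  shows "Cvec ix p i $ ix m = Cvec ix q (\<sigma> i) $ ix m'"
proof -
  let ?s = "\<sigma> i" and ?c = "Cvec ix p i"
  obtain v' where img: "\<phi> (Cmap ix p i) = flip_affine {ix ?s} v'"
    and v': "v' - Cvec ix q ?s \<in> int_vectors"
    using \<sigma>_spec(2)[OF i] by blast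
  have c: "2 *\<^sub>R ?c \<in> int_vectors"
    by (rule double_Cvec_in_int_vectors[OF admissible_p])
  have "transl (lattice_map (2 *\<^sub>R ?c)) = \<phi> (Cmap ix p i \<circ> Cmap ix p i)"
    using i c by (simp add: Cmap_square phi_transl)
  also have "\<dots> = transl (flip_coords {ix ?s} v' + v')"
    using i by (simp add: phi_comp Cmap_in_Kgroup img flip_affine_square)
  finally have square: "lattice_map (2 *\<^sub>R ?c) = flip_coords {ix ?s} v' + v'"
    by (simp add: transl_eq_iff)
  let ?a = "?c $ ix m" and ?b = "Cvec ix q ?s $ ix m'"
    and ?sign = "lattice_map (axis (ix m) 1) $ ix m'"
  have coord: "(flip_coords {ix ?s} v' + v') $ ix m' = 2 * ?a * ?sign"
    using coordinate_if_row_supported_in[OF row c] by (simp add: square)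
  have "?a * ?sign - ?b \<in> \<int>"
  proof (cases "ix m' = ix ?s")
    case True
    then have "?b = 0"
      using Cvec_nth_self[OF \<sigma>_spec(1)[OF i]] by simp
    moreover have "?a * ?sign = 0"
      using coord True by simp
    ultimately show ?thesis
      by (metis Ints_0 diff_zero)
  next
    case False
    then have "?a * ?sign - ?b = (v' - Cvec ix q ?s) $ ix m'"
      using coord by simp
    then show ?thesis
      using v' by (simp add: mem_int_vectors)
  qed
  then show ?thesis
    by (rule half_values_eq_if_int_diff[OF Cvec_nth_values[OF admissible_p i m]
          Cvec_nth_values[OF admissible_q \<sigma>_spec(1)[OF i] m'] entry_unit_if_row_supported_in[OF row]])
qed

lemma \<sigma>_eq_id: "i \<in> {1..CARD('n) - 1} \<Longrightarrow> \<sigma> i = i"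
proof (induction "CARD('n) - i" arbitrary: i rule: less_induct)
  case less
  note i = less.prems
  have next_row: "row_supported_in (ix (i + 1)) (ix (i + 1))"
  proof (cases "i + 1 = CARD('n)")
    case True
    then show ?thesis
      using row_supported_in_last by simp
  next
    case False
    then have next_i: "i + 1 \<in> {1..CARD('n) - 1}"
      using i by auto
    then have "\<sigma> (i + 1) = i + 1"
      by (intro less.hyps) auto
    then show ?thesis
      using row_supported_in_\<sigma>[OF next_i] by simp
  qed
  have "\<sigma> i \<le> i"
  proof (rule ccontr)
    assume "\<not> \<sigma> i \<le> i"
    moreover have si: "\<sigma> i \<in> {1..CARD('n) - 1}"
      by (rule \<sigma>_spec(1)[OF i])
    ultimately have "\<sigma> (\<sigma> i) = \<sigma> i"
      by (intro less.hyps) auto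
    then have "\<sigma> i = i"
      using inj_onD[OF inj_on_\<sigma> _ si i] by simp
    with \<open>\<not> \<sigma> i \<le> i\<close> show False
      by simp
  qed
  have "Cvec ix p i $ ix (i + 1) = Cvec ix q (\<sigma> i) $ ix (i + 1)"
    using i by (intro Cvec_nth_transport[OF i _ _ next_row]) auto
  moreover have "i + 1 \<in> {1..CARD('n)}"
    using i by auto
  ultimately show "\<sigma> i = i"
    using Cvec_nth[OF i] Cvec_nth[OF \<sigma>_spec(1)[OF i]] \<open>\<sigma> i \<le> i\<close> by (simp split: if_splits)
qed

lemma params_eq: "p = q"
proof
  fix x :: "nat \<times> nat"
  obtain j i where x: "x = (j, i)"
    by (cases x)
  show "p x = q x"
  proof (cases "1 \<le> j \<and> j < i \<and> i \<le> CARD('n) - 1")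
    case False
    then show ?thesis
      using admissible_p admissible_q by (simp add: x admissible_def)
  next
    case True
    then have i: "i \<in> {1..CARD('n) - 1}" and j: "j \<in> {1..CARD('n) - 1}" and jn: "j \<in> {1..CARD('n)}"
      by auto
    have "row_supported_in (ix j) (ix j)"
      using row_supported_in_\<sigma>[OF j] \<sigma>_eq_id[OF j] by simp
    then have "Cvec ix p i $ ix j = Cvec ix q i $ ix j"
      using Cvec_nth_transport[OF i jn jn] \<sigma>_eq_id[OF i] by simp
    then show ?thesis
      using Cvec_nth[OF i jn] True by (simp add: x)
  qed
qed

end

lemma (in coordinate_labelling) Kgroup_iso_imp_eq:
  assumes p: "admissible CARD('n) p" and q: "admissible CARD('n) q"
    and iso: "Kgroup ix p \<cong> Kgroup ix q"
  shows "p = q"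
proof -
  obtain \<phi> where "\<phi> \<in> iso (Kgroup ix p) (Kgroup ix q)"
    using iso by (auto simp: is_iso_def)
  then interpret Kgroup_isomorphism ix p q \<phi>
    using p q by unfold_locales
  show ?thesis
    by (rule params_eq)
qed

section \<open>Counting\<close>

lemma card_index_pairs: "card {(j, i). 1 \<le> j \<and> j < i \<and> i \<le> M} = M * (M - 1) div 2"
proof -
  let ?P = "\<lambda>M. {(j, i). 1 \<le> j \<and> j < i \<and> i \<le> (M :: nat)}"
  have "2 * card (?P M) = M * (M - 1)"
  proof (induction M)
    case 0
    then show ?case
      by (auto simp: card_eq_0_iff)
  next
    case (Suc M)
    have "?P (Suc M) = ?P M \<union> (\<lambda>j. (j, Suc M)) ` {1..M}"
      by auto
    moreover have "finite (?P M)"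
      by (rule finite_subset[of _ "{..M} \<times> {..M}"]) auto
    moreover have "?P M \<inter> (\<lambda>j. (j, Suc M)) ` {1..M} = {}"
      by auto
    moreover have "card ((\<lambda>j. (j, Suc M)) ` {1..M}) = M"
      by (simp add: card_image inj_on_def)
    ultimately have "card (?P (Suc M)) = card (?P M) + M"
      by (simp add: card_Un_disjoint)
    with Suc.IH show ?case
      by (cases M) (auto simp: algebra_simps)
  qed
  then show ?thesis
    by simp
qed

lemma card_admissible: "card {p. admissible n p} = 2 ^ ((n - 1) * (n - 2) div 2)"
proof -
  let ?P = "{(j, i). 1 \<le> j \<and> j < i \<and> i \<le> n - 1}"
  let ?extend = "\<lambda>f x. if x \<in> ?P then f x else (0 :: real)"
  have "finite ?P"
    by (rule finite_subset[of _ "{..n} \<times> {..n}"]) auto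
  have "{p. admissible n p} = ?extend ` PiE ?P (\<lambda>_. {0, 1/2})"
  proof
    show "{p. admissible n p} \<subseteq> ?extend ` PiE ?P (\<lambda>_. {0, 1/2})"
    proof
      fix p assume "p \<in> {p. admissible n p}"
      then have p: "admissible n p"
        by simp
      then have "p = ?extend (restrict p ?P)"
        by (auto simp: admissible_def fun_eq_iff)
      moreover have "restrict p ?P \<in> PiE ?P (\<lambda>_. {0, 1/2})"
        unfolding restrict_PiE_iff using admissible_values[OF p] by blast
      ultimately show "p \<in> ?extend ` PiE ?P (\<lambda>_. {0, 1/2})"
        by blast
    qed
    show "?extend ` PiE ?P (\<lambda>_. {0, 1/2}) \<subseteq> {p. admissible n p}"
      by (auto simp: admissible_def PiE_iff)
  qed
  moreover have "inj_on ?extend (PiE ?P (\<lambda>_. {0, 1/2}))"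
    by (rule inj_onI) (metis (no_types, lifting) PiE_ext)
  ultimately have "card {p. admissible n p} = 2 ^ card ?P"
    using \<open>finite ?P\<close> by (simp add: card_image card_PiE numeral_2_eq_2)
  also have "card ?P = (n - 1) * (n - 2) div 2"
    using card_index_pairs[of "n - 1"] by (simp add: numeral_2_eq_2)
  finally show ?thesis .
qed

lemma (in coordinate_labelling) card_Kfamily:
  "card (Kfamily ix) = 2 ^ ((CARD('n) - 1) * (CARD('n) - 2) div 2)"
proof -
  have "inj_on (\<lambda>p. carrier (Kgroup ix p)) {p. admissible CARD('n) p}"
  proof (rule inj_onI)
    fix p q assume "p \<in> {p. admissible CARD('n) p}" "q \<in> {p. admissible CARD('n) p}"
      and same_carrier: "carrier (Kgroup ix p) = carrier (Kgroup ix q)"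
    moreover have "Kgroup ix p = Kgroup ix q"
      using Kgroup_eq_carrier_update[of ix p] Kgroup_eq_carrier_update[of ix q] same_carrier
      by simp
    ultimately show "p = q"
      using Kgroup_iso_imp_eq iso_refl[of "Kgroup ix p"] by simp
  qed
  moreover have "Kfamily ix = (\<lambda>p. carrier (Kgroup ix p)) ` {p. admissible CARD('n) p}"
    by (auto simp: Kfamily_def)
  ultimately show ?thesis
    by (simp add: card_image card_admissible)
qed

theorem corollary4p5:
  fixes ix :: "nat \<Rightarrow> 'n::finite"
  assumes "CARD('n) \<ge> 2"
    and "bij_betw ix {1..CARD('n)} UNIV"
  shows "card (Kfamily ix) = 2 ^ ((CARD('n) - 1) * (CARD('n) - 2) div 2)
     \<and> (\<forall>\<Gamma>\<in>Kfamily ix. bieberbach \<Gamma>)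
     \<and> (\<forall>p q. admissible CARD('n) p \<and> admissible CARD('n) q \<and> p \<noteq> q
              \<longrightarrow> \<not> (Kgroup ix p \<cong> Kgroup ix q))"
proof -
  interpret coordinate_labelling ix
    by (rule coordinate_labelling.intro) (fact assms(2))
  have "\<forall>\<Gamma>\<in>Kfamily ix. bieberbach \<Gamma>"
    by (auto simp: Kfamily_def bieberbach_Kgroup)
  then show ?thesis
    using card_Kfamily Kgroup_iso_imp_eq by blast
qed

end
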